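(* Let $H=(V,E)$ be a finite hypergraph and $A\subset E$. Let $V_1,\dots,V_N\subset V$ be the vertex sets of the connected components of $H|_A=(V_A,A)$, and for $k=1,\dots,N$ let $E_k=\{e\in A : e\subset V_k\}$. Define $$\mathcal{V}_k=\{\tilde V\subset V_k : \tilde V\neq\emptyset \text{ and } |\tilde V\cap e| \text{ is even for all } e\in E_k\},\qquad \mathcal{U}_k=\Big\{\prod_{v\in\tilde V}\Lambda_v : \tilde V\in\mathcal{V}_k\Big\},$$ $\mathcal{U}=\bigcup_{k=1}^N\mathcal{U}_k$ and $\mathcal{Q}=\{\Lambda_v : v\in V\setminus\bigcup_{k=1}^N V_k\}$. Then $\mathcal{O}_A=\mathcal{G}(\mathcal{U}\cup\mathcal{Q})$. Moreover, if $H$ is a graph, then $\mathcal{V}_k=\{V_k\}$ for all $k=1,\dots,N$.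
   Context: A hypergraph is $H=(V,E)$ with $V$ finite and $E\subset\mathcal{P}(V)$; it is a graph if every edge has exactly two elements. Fix enumerations $E=\{e_1,\dots,e_{|E|}\}$, $V=\{v_1,\dots,v_{|V|}\}$. For $w:E\to\mathbb{Z}_2$ the physical state is $|\psi_w\rangle=|w(e_1)\cdots w(e_{|E|})\rangle$ (qubits indexed by edges). $w$ is a parity weight if there is $f:V\to\mathbb{Z}_2$ with $\overline{w(e)}=\bigoplus_{v\in e}f(v)$ for all $e\in E$, where $\overline{p}=p\oplus1$; $\Pi$ is the set of $|\psi_w\rangle$ with $w$ a parity weight. For $v\in V$, the logical line operator $\Lambda_v:\Pi\to\Pi$ sends $|\psi_w\rangle$ to $|\psi_{w'}\rangle$ where $w'(e)=\overline{w(e)}$ if $v\in e$ and $w'(e)=w(e)$ otherwise. $\mathbb{\Lambda}=\{\Lambda_v : v\in V\}\cup\{\mathbb{1}\}$. For a set $F$ of maps $\Pi\to\Pi$, $\mathcal{G}(F)$ is the set of all finite compositions of elements of $F$, the empty composition being the identity $\mathbb{1}$. For $|\psi\rangle\in\Pi$ and non-empty $B\subset E$, $|\psi\rangle_B$ denotes the restriction to the qubits indexed by $B$. $\mathcal{O}_B=\{P\in\mathcal{G}(\mathbb{\Lambda}) : (P|\psi\rangle)_B=|\psi\rangle_B\ \forall|\psi\rangle\in\Pi\}$ for non-empty $B$, and $\mathcal{O}_\emptyset=\mathcal{G}(\mathbb{\Lambda})$. $H|_A=(V_A,A)$ with $V_A=\bigcup_{e\in A}e$; its connected components are with respect to edges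 in $A$. *)

theory Defs
  imports Main
begin

text \<open>A state |psi_w> is identified with its weight w : E -> Z2, encoded as a
function on edges (bool = Z2), with the convention w e = False for e \<notin> E.\<close>

type_synonym 'v state = "'v set \<Rightarrow> bool"
type_synonym 'v op = "'v state \<Rightarrow> 'v state"

definition hypergraph :: "'v set \<Rightarrow> 'v set set \<Rightarrow> bool" where
  "hypergraph V E \<longleftrightarrow> finite V \<and> E \<subseteq> Pow V"

definition is_graph :: "'v set set \<Rightarrow> bool" where
  "is_graph E \<longleftrightarrow> (\<forall>e\<in>E. card e = 2)"

definition parity_weight :: "'v set set \<Rightarrow> 'v state \<Rightarrow> bool" where
  "parity_weight E w \<longleftrightarrow>
     (\<exists>f :: 'v \<Rightarrow> bool. \<forall>e\<in>E. (\<not> w e) = odd (card {v\<in>e. f v}))"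

definition PiS :: "'v set set \<Rightarrow> 'v state set" where
  "PiS E = {w. (\<forall>e. e \<notin> E \<longrightarrow> w e = False) \<and> parity_weight E w}"

definition Lam :: "'v set set \<Rightarrow> 'v \<Rightarrow> 'v op" where
  "Lam E v w = (\<lambda>e. if e \<in> E \<and> v \<in> e then \<not> w e else w e)"

definition LamSet :: "'v set \<Rightarrow> 'v set set \<Rightarrow> 'v op set" where
  "LamSet V E = {Lam E v | v. v \<in> V} \<union> {id}"

inductive_set Gen :: "'v op set \<Rightarrow> 'v op set" for F :: "'v op set" where
  Gen_id: "id \<in> Gen F"
| Gen_comp: "f \<in> F \<Longrightarrow> g \<in> Gen F \<Longrightarrow> f \<circ> g \<in> Gen F"

definition Obs :: "'v set \<Rightarrow> 'v set set \<Rightarrow> 'v set set \<Rightarrow> 'v op set" where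
  "Obs V E B = (if B = {} then Gen (LamSet V E)
     else {P \<in> Gen (LamSet V E). \<forall>w\<in>PiS E. \<forall>e\<in>B. P w e = w e})"

definition LamProd :: "'v set set \<Rightarrow> 'v set \<Rightarrow> 'v op" where
  "LamProd E S = Finite_Set.fold (\<lambda>v g. Lam E v \<circ> g) id S"

definition adjA :: "'v set set \<Rightarrow> ('v \<times> 'v) set" where
  "adjA A = {(u, w). \<exists>e\<in>A. u \<in> e \<and> w \<in> e}"

definition components :: "'v set set \<Rightarrow> 'v set set" where
  "components A = (\<Union>A) // Restr ((adjA A)\<^sup>*) (\<Union>A)"

definition edgesIn :: "'v set set \<Rightarrow> 'v set \<Rightarrow> 'v set set" where
  "edgesIn A K = {e \<in> A. e \<subseteq> K}"

definition Vcal :: "'v set set \<Rightarrow> 'v set \<Rightarrow> 'v set set" where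
  "Vcal A K = {S. S \<subseteq> K \<and> S \<noteq> {} \<and> (\<forall>e\<in>edgesIn A K. even (card (S \<inter> e)))}"

definition Ucal :: "'v set set \<Rightarrow> 'v set set \<Rightarrow> 'v set \<Rightarrow> 'v op set" where
  "Ucal E A K = {LamProd E S | S. S \<in> Vcal A K}"

end

theory Submission
  imports Defs
begin

(* The line operators commute and are involutions, so the monoid they generate consists of the
   products over vertex sets S, and the product over S flips exactly the qubits e with an odd
   number of vertices in S. Evaluating on the all-ones state, such a product fixes the qubits of
   A on all of Pi iff S meets every edge of A evenly. An even set splits along the connected
   components of H|A: its part inside a component is again even, i.e. an element of V_k, and its
   vertices outside V_A touch no edge of A. In a graph, evenness on an edge {y, z} forces
   y in S iff z in S, so a nonempty even subset of a component is the whole component. *)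

definition parity_flip :: "'v set set \<Rightarrow> 'v set \<Rightarrow> 'v op" where
  "parity_flip E S w = (\<lambda>e. if e \<in> E \<and> odd (card (S \<inter> e)) then \<not> w e else w e)"

definition meets_evenly :: "'v set set \<Rightarrow> 'v set \<Rightarrow> bool" where
  "meets_evenly A S \<longleftrightarrow> (\<forall>e\<in>A. even (card (S \<inter> e)))"

subsection \<open>Products of line operators\<close>

lemma Lam_comm: "Lam E x \<circ> Lam E y = Lam E y \<circ> Lam E x"
  by (intro ext) (auto simp: Lam_def)

lemma parity_flip_empty [simp]: "parity_flip E {} = id"
  by (intro ext) (auto simp: parity_flip_def)

lemma Lam_comp_parity_flip:
  assumes "finite S" "x \<notin> S"
  shows "Lam E x \<circ> parity_flip E S = parity_flip E (insert x S)"
  using assms by (intro ext) (auto simp: Lam_def parity_flip_def Int_insert_left)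

lemma Lam_eq_parity_flip: "Lam E v = parity_flip E {v}"
  using Lam_comp_parity_flip[of "{}" v E] by simp

lemma LamProd_eq_parity_flip:
  assumes "finite S"
  shows "LamProd E S = parity_flip E S"
proof -
  interpret comp_fun_commute "\<lambda>v g. Lam E v \<circ> g"
    by unfold_locales (simp add: fun_eq_iff Lam_comm[unfolded fun_eq_iff comp_apply])
  show ?thesis
    using assms by (induction S rule: finite_induct)
      (simp_all add: LamProd_def Lam_comp_parity_flip)
qed

lemma odd_card_symdiff_Int:
  assumes "finite S" "finite T"
  shows "odd (card (sym_diff S T \<inter> e)) \<longleftrightarrow> odd (card (S \<inter> e)) \<noteq> odd (card (T \<inter> e))"
proof -
  have S: "card (S \<inter> e) = card ((S - T) \<inter> e) + card (S \<inter> T \<inter> e)"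
    using assms by (subst card_Un_disjoint[symmetric]) (auto intro: arg_cong[where f = card])
  have T: "card (T \<inter> e) = card ((T - S) \<inter> e) + card (S \<inter> T \<inter> e)"
    using assms by (subst card_Un_disjoint[symmetric]) (auto intro: arg_cong[where f = card])
  have "card (sym_diff S T \<inter> e) = card ((S - T) \<inter> e) + card ((T - S) \<inter> e)"
    using assms by (subst card_Un_disjoint[symmetric]) (auto intro: arg_cong[where f = card])
  then show ?thesis
    unfolding S T by presburger
qed

lemma parity_flip_comp:
  assumes "finite S" "finite T"
  shows "parity_flip E S \<circ> parity_flip E T = parity_flip E (sym_diff S T)"
  using odd_card_symdiff_Int[OF assms] by (intro ext) (auto simp: parity_flip_def)

lemma parity_flip_split:
  assumes "finite T" "P \<subseteq> T"
  shows "parity_flip E T = parity_flip E P \<circ> parity_flip E (T - P)"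
proof -
  have "sym_diff P (T - P) = T"
    using assms(2) by blast
  then show ?thesis
    using assms by (simp add: parity_flip_comp finite_subset)
qed

lemma meets_evenly_symdiff:
  assumes "finite S" "finite T" "meets_evenly A S" "meets_evenly A T"
  shows "meets_evenly A (sym_diff S T)"
  using assms odd_card_symdiff_Int[OF assms(1,2)] by (auto simp: meets_evenly_def)

lemma meets_evenly_Diff:
  assumes "finite S" "P \<subseteq> S" "meets_evenly A S" "meets_evenly A P"
  shows "meets_evenly A (S - P)"
proof -
  have "sym_diff S P = S - P"
    using assms(2) by blast
  then show ?thesis
    using meets_evenly_symdiff[of S P A] assms finite_subset by metis
qed

lemma meets_evenly_empty [simp]: "meets_evenly {} S"
  by (simp add: meets_evenly_def)

lemma meets_evenly_singleton: "v \<notin> \<Union>A \<Longrightarrow> meets_evenly A {v}"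
  by (auto simp: meets_evenly_def Int_insert_left)

subsection \<open>Generated monoids\<close>

lemma Gen_base: "f \<in> F \<Longrightarrow> f \<in> Gen F"
  using Gen_comp[OF _ Gen_id, of f F] by simp

lemma Gen_comp_closed: "f \<in> Gen F \<Longrightarrow> g \<in> Gen F \<Longrightarrow> f \<circ> g \<in> Gen F"
  by (induction f rule: Gen.induct) (auto simp: o_assoc[symmetric] intro: Gen_comp)

lemma Gen_least:
  assumes "id \<in> M" "F \<subseteq> M" "\<And>f g. f \<in> M \<Longrightarrow> g \<in> M \<Longrightarrow> f \<circ> g \<in> M"
  shows "Gen F \<subseteq> M"
proof
  fix f assume "f \<in> Gen F"
  then show "f \<in> M"
  proof (induction f rule: Gen.induct)
    case Gen_id
    show ?case
      by (rule assms(1))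
  next
    case (Gen_comp f g)
    then show ?case
      using assms(2,3) by blast
  qed
qed

lemma even_parity_flips_comp_closed:
  assumes "finite V"
  shows "f \<in> {parity_flip E S | S. S \<subseteq> V \<and> meets_evenly A S}
    \<Longrightarrow> g \<in> {parity_flip E S | S. S \<subseteq> V \<and> meets_evenly A S}
    \<Longrightarrow> f \<circ> g \<in> {parity_flip E S | S. S \<subseteq> V \<and> meets_evenly A S}"
proof clarify
  fix S T assume "S \<subseteq> V" "meets_evenly A S" "T \<subseteq> V" "meets_evenly A T"
  moreover have "finite S" "finite T"
    using \<open>S \<subseteq> V\<close> \<open>T \<subseteq> V\<close> assms finite_subset by auto
  ultimately show "\<exists>U. parity_flip E S \<circ> parity_flip E T = parity_flip E U \<and> U \<subseteq> V \<and> meets_evenly A U"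
    by (intro exI[of _ "sym_diff S T"]) (auto simp: parity_flip_comp meets_evenly_symdiff)
qed

text \<open>Removing an even piece \<open>P\<close> from an even set \<open>T\<close> leaves the smaller even set \<open>T - P\<close>.\<close>

lemma parity_flip_in_Gen_by_pieces:
  assumes "finite S" "meets_evenly A S"
    and pieces: "\<And>T v. T \<subseteq> S \<Longrightarrow> meets_evenly A T \<Longrightarrow> v \<in> T
      \<Longrightarrow> \<exists>P\<subseteq>T. v \<in> P \<and> meets_evenly A P \<and> parity_flip E P \<in> Gen F"
  shows "parity_flip E S \<in> Gen F"
proof -
  have "parity_flip E T \<in> Gen F" if "finite T" "T \<subseteq> S" "meets_evenly A T" for T
    using that
  proof (induction T rule: finite_psubset_induct)
    case (psubset T)
    show ?case
    proof (cases "T = {}")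
      case True
      then show ?thesis
        by (simp only: parity_flip_empty Gen.Gen_id)
    next
      case False
      then obtain v where "v \<in> T"
        by blast
      then obtain P
        where P: "P \<subseteq> T" "v \<in> P" "meets_evenly A P" "parity_flip E P \<in> Gen F"
        using pieces[OF psubset.prems] by blast
      have "T - P \<subset> T" "T - P \<subseteq> S"
        using P(1,2) psubset.prems(1) by blast+
      moreover have "meets_evenly A (T - P)"
        using meets_evenly_Diff[OF psubset.hyps P(1) psubset.prems(2) P(3)] .
      ultimately have "parity_flip E (T - P) \<in> Gen F"
        by (rule psubset.IH)
      with P(4) show ?thesis
        unfolding parity_flip_split[OF psubset.hyps P(1)] by (rule Gen_comp_closed)
    qed
  qed
  then show ?thesis
    using assms(1,2) by blast
qed

lemma Gen_LamSet_eq: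
  assumes "finite V"
  shows "Gen (LamSet V E) = {parity_flip E S | S. S \<subseteq> V}"
proof
  let ?M = "{parity_flip E S | S. S \<subseteq> V \<and> meets_evenly {} S}"
  have flips_in_M: "parity_flip E S \<in> ?M" if "S \<subseteq> V" for S
    using that by auto
  have "id \<in> ?M"
    using flips_in_M[of "{}"] by simp
  moreover have "LamSet V E \<subseteq> ?M"
    unfolding LamSet_def Lam_eq_parity_flip using \<open>id \<in> ?M\<close> flips_in_M by blast
  ultimately have "Gen (LamSet V E) \<subseteq> ?M"
    using even_parity_flips_comp_closed[OF assms] by (rule Gen_least)
  then show "Gen (LamSet V E) \<subseteq> {parity_flip E S | S. S \<subseteq> V}"
    by blast
next
  have "parity_flip E S \<in> Gen (LamSet V E)" if "S \<subseteq> V" for S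
  proof (rule parity_flip_in_Gen_by_pieces[where A = "{}"])
    show "finite S"
      using that assms finite_subset by blast
    show "meets_evenly {} S"
      by simp
    fix T v assume "T \<subseteq> S" "v \<in> T"
    then have "Lam E v \<in> LamSet V E"
      unfolding LamSet_def using that by blast
    then have "parity_flip E {v} \<in> Gen (LamSet V E)"
      unfolding Lam_eq_parity_flip by (rule Gen_base)
    then show "\<exists>P\<subseteq>T. v \<in> P \<and> meets_evenly {} P \<and> parity_flip E P \<in> Gen (LamSet V E)"
      using \<open>v \<in> T\<close> \<open>T \<subseteq> S\<close> meets_evenly_empty by blast
  qed
  then show "{parity_flip E S | S. S \<subseteq> V} \<subseteq> Gen (LamSet V E)"
    by blast
qed

subsection \<open>Observables as even parity flips\<close>

lemma all_ones_in_PiS: "(\<lambda>e. e \<in> E) \<in> PiS E"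
  by (auto simp: PiS_def parity_weight_def intro: exI[of _ "\<lambda>_. False"])

lemma parity_flip_fixes_iff_meets_evenly:
  assumes "A \<subseteq> E"
  shows "(\<forall>w\<in>PiS E. \<forall>e\<in>A. parity_flip E S w e = w e) \<longleftrightarrow> meets_evenly A S"
proof
  assume fixes_A: "\<forall>w\<in>PiS E. \<forall>e\<in>A. parity_flip E S w e = w e"
  show "meets_evenly A S"
    unfolding meets_evenly_def
  proof
    fix e assume "e \<in> A"
    then have "parity_flip E S (\<lambda>e. e \<in> E) e = (e \<in> E)" "e \<in> E"
      using fixes_A all_ones_in_PiS assms by blast+
    then show "even (card (S \<inter> e))"
      by (simp add: parity_flip_def split: if_splits)
  qed
qed (auto simp: meets_evenly_def parity_flip_def)

lemma Obs_eq_even_parity_flips: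
  assumes "hypergraph V E" "A \<subseteq> E"
  shows "Obs V E A = {parity_flip E S | S. S \<subseteq> V \<and> meets_evenly A S}"
proof -
  have "finite V"
    using assms(1) by (simp add: hypergraph_def)
  then show ?thesis
    unfolding Obs_def Gen_LamSet_eq[OF \<open>finite V\<close>]
    using parity_flip_fixes_iff_meets_evenly[OF assms(2)] by auto
qed

subsection \<open>Connected components\<close>

lemma equiv_components: "equiv (\<Union>A) (Restr ((adjA A)\<^sup>*) (\<Union>A))"
proof (rule equivI)
  have "sym ((adjA A)\<^sup>*)"
    by (rule sym_rtrancl) (auto simp: sym_def adjA_def)
  then show "sym (Restr ((adjA A)\<^sup>*) (\<Union>A))"
    by (auto simp: sym_def)
  show "trans (Restr ((adjA A)\<^sup>*) (\<Union>A))"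
    by (auto simp: trans_def intro: rtrancl_trans)
qed (auto simp: refl_on_def)

lemma Union_components: "\<Union>(components A) = \<Union>A"
  unfolding components_def using equiv_components by (rule Union_quotient)

lemma component_subset: "K \<in> components A \<Longrightarrow> K \<subseteq> \<Union>A"
  unfolding components_def using equiv_components by (rule in_quotient_imp_subset)

lemma component_nonempty: "K \<in> components A \<Longrightarrow> K \<noteq> {}"
  unfolding components_def using equiv_components by (rule in_quotient_imp_non_empty)

lemma edge_subset_component:
  assumes "K \<in> components A" "e \<in> A" "y \<in> e" "y \<in> K"
  shows "e \<subseteq> K"
proof
  fix z assume "z \<in> e"
  then have "(y, z) \<in> Restr ((adjA A)\<^sup>*) (\<Union>A)"
    using assms(2,3) by (auto simp: adjA_def)
  then show "z \<in> K"
    using assms(1,4) equiv_components in_quotient_imp_closed unfolding components_def by metis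
qed

lemma component_subset_if_adj_closed:
  assumes "K \<in> components A" "s \<in> K" "s \<in> S"
    and closed: "\<And>y z. y \<in> S \<Longrightarrow> (y, z) \<in> adjA A \<Longrightarrow> z \<in> S"
  shows "K \<subseteq> S"
proof
  fix u assume "u \<in> K"
  then have "(s, u) \<in> (adjA A)\<^sup>*"
    using assms(1,2) equiv_components in_quotient_imp_in_rel unfolding components_def
    by (metis empty_subsetI insert_subset IntD1)
  then show "u \<in> S"
    by (induction rule: rtrancl_induct) (use assms(3) closed in auto)
qed

lemma meets_evenly_component_iff:
  assumes "K \<in> components A" "T \<subseteq> K"
  shows "meets_evenly A T \<longleftrightarrow> meets_evenly (edgesIn A K) T"
proof
  show "meets_evenly A T \<Longrightarrow> meets_evenly (edgesIn A K) T"
    by (auto simp: meets_evenly_def edgesIn_def)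
next
  assume even_K: "meets_evenly (edgesIn A K) T"
  have "even (card (T \<inter> e))" if "e \<in> A" for e
  proof (cases "e \<subseteq> K")
    case True
    then show ?thesis
      using even_K \<open>e \<in> A\<close> by (auto simp: meets_evenly_def edgesIn_def)
  next
    case False
    then have "T \<inter> e = {}"
      using edge_subset_component[OF assms(1) \<open>e \<in> A\<close>] assms(2) by blast
    then show ?thesis
      by simp
  qed
  then show "meets_evenly A T"
    by (simp add: meets_evenly_def)
qed

lemma meets_evenly_Int_component:
  assumes "K \<in> components A" "meets_evenly A S"
  shows "meets_evenly A (S \<inter> K)"
proof -
  have "(S \<inter> K) \<inter> e = S \<inter> e" if "e \<in> edgesIn A K" for e
    using that by (auto simp: edgesIn_def)
  then have "meets_evenly (edgesIn A K) (S \<inter> K)"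
    using assms(2) by (auto simp: meets_evenly_def edgesIn_def)
  then show ?thesis
    using meets_evenly_component_iff[OF assms(1)] by blast
qed

subsection \<open>Generators of the observables\<close>

abbreviation component_generators :: "'v set \<Rightarrow> 'v set set \<Rightarrow> 'v set set \<Rightarrow> 'v op set" where
  "component_generators V E A \<equiv>
    (\<Union>K\<in>components A. Ucal E A K) \<union> {Lam E v | v. v \<in> V - \<Union>(components A)}"

lemma component_generator_is_even_parity_flip:
  assumes "hypergraph V E" "A \<subseteq> E" "f \<in> component_generators V E A"
  shows "f \<in> {parity_flip E S | S. S \<subseteq> V \<and> meets_evenly A S}"
proof -
  have fin: "finite V" and AV: "\<Union>A \<subseteq> V"
    using assms(1,2) by (auto simp: hypergraph_def)
  from assms(3) consider (component) K where "K \<in> components A" "f \<in> Ucal E A K"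
    | (isolated) v where "v \<in> V - \<Union>A" "f = Lam E v"
    unfolding Union_components by blast
  then show ?thesis
  proof cases
    case component
    then obtain T where T: "T \<in> Vcal A K" "f = LamProd E T"
      unfolding Ucal_def by blast
    then have "T \<subseteq> K" "meets_evenly (edgesIn A K) T"
      unfolding Vcal_def meets_evenly_def by blast+
    then have "meets_evenly A T"
      using meets_evenly_component_iff[OF component(1)] by blast
    moreover have "T \<subseteq> V"
      using \<open>T \<subseteq> K\<close> component_subset[OF component(1)] AV by blast
    moreover have "f = parity_flip E T"
      using T(2) finite_subset[OF \<open>T \<subseteq> V\<close> fin] by (simp add: LamProd_eq_parity_flip)
    ultimately show ?thesis
      by blast
  next
    case isolated
    then have "f = parity_flip E {v}" "{v} \<subseteq> V" "meets_evenly A {v}"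
      by (simp_all add: Lam_eq_parity_flip meets_evenly_singleton)
    then show ?thesis
      by blast
  qed
qed

lemma even_parity_flip_in_Gen_component_generators:
  assumes "hypergraph V E" "S \<subseteq> V" "meets_evenly A S"
  shows "parity_flip E S \<in> Gen (component_generators V E A)"
proof (rule parity_flip_in_Gen_by_pieces[OF _ assms(3)])
  show "finite S"
    using assms(1,2) finite_subset by (auto simp: hypergraph_def)
  fix T v assume "T \<subseteq> S" "meets_evenly A T" "v \<in> T"
  show "\<exists>P\<subseteq>T. v \<in> P \<and> meets_evenly A P \<and> parity_flip E P \<in> Gen (component_generators V E A)"
  proof (cases "v \<in> \<Union>A")
    case True
    then have "v \<in> \<Union>(components A)"
      by (simp only: Union_components)
    then obtain K where K: "K \<in> components A" "v \<in> K"
      by blast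
    have even: "meets_evenly A (T \<inter> K)"
      using meets_evenly_Int_component[OF K(1) \<open>meets_evenly A T\<close>] .
    then have "meets_evenly (edgesIn A K) (T \<inter> K)"
      using meets_evenly_component_iff[OF K(1)] by blast
    then have "T \<inter> K \<in> Vcal A K"
      using K(2) \<open>v \<in> T\<close> unfolding Vcal_def meets_evenly_def by blast
    then have "LamProd E (T \<inter> K) \<in> component_generators V E A"
      using K(1) unfolding Ucal_def by blast
    moreover have "finite (T \<inter> K)"
      using \<open>finite S\<close> \<open>T \<subseteq> S\<close> finite_subset by blast
    ultimately have "parity_flip E (T \<inter> K) \<in> Gen (component_generators V E A)"
      by (simp add: LamProd_eq_parity_flip Gen_base)
    then show ?thesis
      using even K(2) \<open>v \<in> T\<close> by (intro exI[of _ "T \<inter> K"] conjI) blast+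
  next
    case False
    then have "meets_evenly A {v}"
      by (rule meets_evenly_singleton)
    have "Lam E v \<in> component_generators V E A"
      using False \<open>v \<in> T\<close> \<open>T \<subseteq> S\<close> assms(2) unfolding Union_components by blast
    then have "parity_flip E {v} \<in> Gen (component_generators V E A)"
      unfolding Lam_eq_parity_flip by (rule Gen_base)
    with \<open>meets_evenly A {v}\<close> show ?thesis
      using \<open>v \<in> T\<close> by (intro exI[of _ "{v}"]) simp
  qed
qed

lemma Gen_component_generators_eq:
  assumes "hypergraph V E" "A \<subseteq> E"
  shows "Gen (component_generators V E A) = {parity_flip E S | S. S \<subseteq> V \<and> meets_evenly A S}"
    (is "_ = ?M")
proof
  have "finite V"
    using assms(1) by (simp add: hypergraph_def)
  have "id = parity_flip E {}" "{} \<subseteq> V" "meets_evenly A {}"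
    by (simp_all add: meets_evenly_def)
  then have "id \<in> ?M"
    by blast
  moreover have "component_generators V E A \<subseteq> ?M"
    using component_generator_is_even_parity_flip[OF assms] by blast
  ultimately show "Gen (component_generators V E A) \<subseteq> ?M"
    using even_parity_flips_comp_closed[OF \<open>finite V\<close>] by (rule Gen_least)
next
  show "?M \<subseteq> Gen (component_generators V E A)"
    using even_parity_flip_in_Gen_component_generators[OF assms(1)] by blast
qed

subsection \<open>Graphs\<close>

lemma two_element_subset_if_even_Int:
  assumes "card e = 2" "y \<in> S \<inter> e" "even (card (S \<inter> e))"
  shows "e \<subseteq> S"
proof -
  have "finite e"
    using assms(1) card.infinite by fastforce
  then have "card (S \<inter> e) \<le> 2" "card (S \<inter> e) \<noteq> 0"
    using assms(1,2) card_mono[of e "S \<inter> e"] by auto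
  then have "card (S \<inter> e) = card e"
    using assms(1,3) by presburger
  then show ?thesis
    using card_subset_eq[OF \<open>finite e\<close>, of "S \<inter> e"] by blast
qed

lemma Vcal_graph_component:
  assumes "A \<subseteq> E" "is_graph E" "K \<in> components A"
  shows "Vcal A K = {K}"
proof -
  have card_edge: "card e = 2" if "e \<in> A" for e
    using that assms(1,2) by (auto simp: is_graph_def)
  have "K \<in> Vcal A K"
    using component_nonempty[OF assms(3)] card_edge
    by (auto simp: Vcal_def edgesIn_def Int_absorb1)
  moreover have "S = K" if "S \<in> Vcal A K" for S
  proof -
    have "S \<subseteq> K" "S \<noteq> {}" and even: "meets_evenly (edgesIn A K) S"
      using that unfolding Vcal_def meets_evenly_def by blast+
    then obtain s where "s \<in> S"
      by blast
    have "K \<subseteq> S"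
    proof (rule component_subset_if_adj_closed[OF assms(3)])
      show "s \<in> K" "s \<in> S"
        using \<open>s \<in> S\<close> \<open>S \<subseteq> K\<close> by auto
      fix y z assume "y \<in> S" "(y, z) \<in> adjA A"
      then obtain e where e: "e \<in> A" "y \<in> e" "z \<in> e"
        by (auto simp: adjA_def)
      then have "e \<in> edgesIn A K"
        using edge_subset_component[OF assms(3)] \<open>y \<in> S\<close> \<open>S \<subseteq> K\<close> by (auto simp: edgesIn_def)
      then have "e \<subseteq> S"
        using two_element_subset_if_even_Int[OF card_edge] e even \<open>y \<in> S\<close>
        by (auto simp: meets_evenly_def)
      then show "z \<in> S"
        using e(3) by blast
    qed
    then show ?thesis
      using \<open>S \<subseteq> K\<close> by blast
  qed
  ultimately show ?thesis
    by blast
qed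

theorem lemma1:
  fixes V :: "'v set" and E A :: "'v set set"
  assumes "hypergraph V E" and "A \<subseteq> E"
  shows "Obs V E A = Gen ((\<Union>K\<in>components A. Ucal E A K)
                          \<union> {Lam E v | v. v \<in> V - \<Union>(components A)})
         \<and> (is_graph E \<longrightarrow> (\<forall>K\<in>components A. Vcal A K = {K}))"
  using Obs_eq_even_parity_flips[OF assms] Gen_component_generators_eq[OF assms]
    Vcal_graph_component[OF assms(2)] by simp

end
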